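(* Let $G\in\mathcal{C}$, let $H$ be a hole of $G$, and let $u,v\in V(G)\setminus V(H)$ each be either a major vertex or a clone for $H$. Suppose $u$ and $v$ are nested with respect to $H$ and $uv\in E(G)$. Then $u$ and $v$ have a common neighbor in $H$.
   Context: All graphs are finite and simple; paths are induced paths; a hole is an induced cycle of length at least four. $\mathcal{C}$ is the class of graphs containing no theta, pyramid, prism or turtle as an induced subgraph, where: a theta consists of two nonadjacent vertices $a,b$ and three paths from $a$ to $b$, otherwise vertex-disjoint, any two of which induce a hole; a pyramid consists of a vertex $a$, a triangle $\{b_1,b_2,b_3\}$ and paths $P_i$ from $a$ to $b_i$, pairwise disjoint except at $a$, any two of which induce a hole; a prism consists of two disjoint triangles $\{a_1,a_2,a_3\},\{b_1,b_2,b_3\}$ and pairwise disjoint paths $P_i$ from $a_i$ to $b_i$, any two of which induce a hole; a turtle consists of disjoint paths $P_1$ (from $a_1$ to $b_1$), $P_2$ (from $a_2$ to $b_2$) with $a_1a_2,b_1b_2$ edges and $V(P_1)\cup V(P_2)$ inducing a hole, plus adjacent vertices $x,y$ where $x$ has at least three neighbors in $P_1$ and none in $P_2$, and $y$ has at least three neighbors in $P_2$ and none in $P_1$. For a hole $H$ and $u\notin V(H)$, $N_H(u)$ is the set of neighbors of $u$ in $H$. A vertex $u\notin V(H)$ is minor for $H$ if $N_H(u)\neq\emptyset$ and $N_H(u)$ is contained in the vertex set of some three-vertex subpath of $H$; it is major for $H$ if $N_H(u)\ne\emptyset$ and $u$ is not minor. A vertex $u\notin V(H)$ is a clone of $y\in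 V(H)$ if $N_H(u)=\{x,y,z\}$ where $x\text{-}y\text{-}z$ is a subpath of $H$. Two vertices $u,v\notin V(H)$ are nested with respect to $H$ if there exist distinct $a,b\in V(H)$ such that one of the two $a$–$b$ paths of $H$ contains all neighbors of $u$ in $H$ and the other contains all neighbors of $v$ in $H$. *)

theory Defs
  imports Main
begin

definition graph :: "'a set \<Rightarrow> ('a \<Rightarrow> 'a \<Rightarrow> bool) \<Rightarrow> bool" where
  "graph V E \<longleftrightarrow> finite V \<and> (\<forall>x y. E x y \<longrightarrow> E y x) \<and> (\<forall>x. \<not> E x x)
     \<and> (\<forall>x y. E x y \<longrightarrow> x \<in> V \<and> y \<in> V)"

definition is_path :: "'a set \<Rightarrow> ('a \<Rightarrow> 'a \<Rightarrow> bool) \<Rightarrow> 'a list \<Rightarrow> 'a \<Rightarrow> 'a \<Rightarrow> bool" where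
  "is_path V E P a b \<longleftrightarrow> P \<noteq> [] \<and> hd P = a \<and> last P = b \<and> distinct P \<and> set P \<subseteq> V \<and>
     (\<forall>i<length P. \<forall>j<length P. E (P!i) (P!j) \<longleftrightarrow> (j = i + 1 \<or> i = j + 1))"

definition is_hole :: "'a set \<Rightarrow> ('a \<Rightarrow> 'a \<Rightarrow> bool) \<Rightarrow> 'a list \<Rightarrow> bool" where
  "is_hole V E C \<longleftrightarrow> length C \<ge> 4 \<and> distinct C \<and> set C \<subseteq> V \<and>
     (\<forall>i<length C. \<forall>j<length C.
        E (C!i) (C!j) \<longleftrightarrow> (j = Suc i mod length C \<or> i = Suc j mod length C))"

definition induces_hole :: "'a set \<Rightarrow> ('a \<Rightarrow> 'a \<Rightarrow> bool) \<Rightarrow> 'a set \<Rightarrow> bool" where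
  "induces_hole V E S \<longleftrightarrow> (\<exists>C. is_hole V E C \<and> set C = S)"

definition has_theta :: "'a set \<Rightarrow> ('a \<Rightarrow> 'a \<Rightarrow> bool) \<Rightarrow> bool" where
  "has_theta V E \<longleftrightarrow> (\<exists>a b P1 P2 P3. a \<in> V \<and> b \<in> V \<and> a \<noteq> b \<and> \<not> E a b \<and>
     is_path V E P1 a b \<and> is_path V E P2 a b \<and> is_path V E P3 a b \<and>
     set P1 \<inter> set P2 = {a, b} \<and> set P1 \<inter> set P3 = {a, b} \<and> set P2 \<inter> set P3 = {a, b} \<and>
     induces_hole V E (set P1 \<union> set P2) \<and> induces_hole V E (set P1 \<union> set P3) \<and>
     induces_hole V E (set P2 \<union> set P3))"

definition has_pyramid :: "'a set \<Rightarrow> ('a \<Rightarrow> 'a \<Rightarrow> bool) \<Rightarrow> bool" where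
  "has_pyramid V E \<longleftrightarrow> (\<exists>a b1 b2 b3 P1 P2 P3.
     b1 \<noteq> b2 \<and> b1 \<noteq> b3 \<and> b2 \<noteq> b3 \<and> E b1 b2 \<and> E b1 b3 \<and> E b2 b3 \<and>
     is_path V E P1 a b1 \<and> is_path V E P2 a b2 \<and> is_path V E P3 a b3 \<and>
     set P1 \<inter> set P2 = {a} \<and> set P1 \<inter> set P3 = {a} \<and> set P2 \<inter> set P3 = {a} \<and>
     induces_hole V E (set P1 \<union> set P2) \<and> induces_hole V E (set P1 \<union> set P3) \<and>
     induces_hole V E (set P2 \<union> set P3))"

definition has_prism :: "'a set \<Rightarrow> ('a \<Rightarrow> 'a \<Rightarrow> bool) \<Rightarrow> bool" where
  "has_prism V E \<longleftrightarrow> (\<exists>a1 a2 a3 b1 b2 b3 P1 P2 P3.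
     a1 \<noteq> a2 \<and> a1 \<noteq> a3 \<and> a2 \<noteq> a3 \<and> E a1 a2 \<and> E a1 a3 \<and> E a2 a3 \<and>
     b1 \<noteq> b2 \<and> b1 \<noteq> b3 \<and> b2 \<noteq> b3 \<and> E b1 b2 \<and> E b1 b3 \<and> E b2 b3 \<and>
     {a1, a2, a3} \<inter> {b1, b2, b3} = {} \<and>
     is_path V E P1 a1 b1 \<and> is_path V E P2 a2 b2 \<and> is_path V E P3 a3 b3 \<and>
     set P1 \<inter> set P2 = {} \<and> set P1 \<inter> set P3 = {} \<and> set P2 \<inter> set P3 = {} \<and>
     induces_hole V E (set P1 \<union> set P2) \<and> induces_hole V E (set P1 \<union> set P3) \<and>
     induces_hole V E (set P2 \<union> set P3))"

definition has_turtle :: "'a set \<Rightarrow> ('a \<Rightarrow> 'a \<Rightarrow> bool) \<Rightarrow> bool" where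
  "has_turtle V E \<longleftrightarrow> (\<exists>a1 b1 a2 b2 P1 P2 x y.
     is_path V E P1 a1 b1 \<and> is_path V E P2 a2 b2 \<and> set P1 \<inter> set P2 = {} \<and>
     E a1 a2 \<and> E b1 b2 \<and> induces_hole V E (set P1 \<union> set P2) \<and>
     x \<in> V \<and> y \<in> V \<and> x \<notin> set P1 \<union> set P2 \<and> y \<notin> set P1 \<union> set P2 \<and> E x y \<and>
     card {w \<in> set P1. E x w} \<ge> 3 \<and> (\<forall>w \<in> set P2. \<not> E x w) \<and>
     card {w \<in> set P2. E y w} \<ge> 3 \<and> (\<forall>w \<in> set P1. \<not> E y w))"

definition in_class_C :: "'a set \<Rightarrow> ('a \<Rightarrow> 'a \<Rightarrow> bool) \<Rightarrow> bool" where
  "in_class_C V E \<longleftrightarrow> \<not> has_theta V E \<and> \<not> has_pyramid V E \<and> \<not> has_prism V E \<and> \<not> has_turtle V E"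

definition nbrs_H :: "('a \<Rightarrow> 'a \<Rightarrow> bool) \<Rightarrow> 'a list \<Rightarrow> 'a \<Rightarrow> 'a set" where
  "nbrs_H E H u = {w \<in> set H. E u w}"

definition three_path :: "'a list \<Rightarrow> nat \<Rightarrow> 'a set" where
  "three_path H i = {H ! (i mod length H), H ! (Suc i mod length H), H ! (Suc (Suc i) mod length H)}"

definition minor :: "('a \<Rightarrow> 'a \<Rightarrow> bool) \<Rightarrow> 'a list \<Rightarrow> 'a \<Rightarrow> bool" where
  "minor E H u \<longleftrightarrow> u \<notin> set H \<and> nbrs_H E H u \<noteq> {} \<and>
     (\<exists>i<length H. nbrs_H E H u \<subseteq> three_path H i)"

definition major :: "('a \<Rightarrow> 'a \<Rightarrow> bool) \<Rightarrow> 'a list \<Rightarrow> 'a \<Rightarrow> bool" where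
  "major E H u \<longleftrightarrow> u \<notin> set H \<and> nbrs_H E H u \<noteq> {} \<and> \<not> minor E H u"

definition clone_of :: "('a \<Rightarrow> 'a \<Rightarrow> bool) \<Rightarrow> 'a list \<Rightarrow> 'a \<Rightarrow> 'a \<Rightarrow> bool" where
  "clone_of E H u y \<longleftrightarrow> u \<notin> set H \<and>
     (\<exists>i<length H. y = H ! (Suc i mod length H) \<and> nbrs_H E H u = three_path H i)"

definition is_clone :: "('a \<Rightarrow> 'a \<Rightarrow> bool) \<Rightarrow> 'a list \<Rightarrow> 'a \<Rightarrow> bool" where
  "is_clone E H u \<longleftrightarrow> (\<exists>y \<in> set H. clone_of E H u y)"

text \<open>Vertex set of the path of H going forward from index i to index j.\<close>
definition arc :: "'a list \<Rightarrow> nat \<Rightarrow> nat \<Rightarrow> 'a set" where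
  "arc H i j = {H ! ((i + k) mod length H) | k. k \<le> (j + length H - i) mod length H}"

definition nested :: "('a \<Rightarrow> 'a \<Rightarrow> bool) \<Rightarrow> 'a list \<Rightarrow> 'a \<Rightarrow> 'a \<Rightarrow> bool" where
  "nested E H u v \<longleftrightarrow> u \<notin> set H \<and> v \<notin> set H \<and>
     (\<exists>i<length H. \<exists>j<length H. i \<noteq> j \<and>
        nbrs_H E H u \<subseteq> arc H i j \<and> nbrs_H E H v \<subseteq> arc H j i)"

end

theory Submission
  imports Defs
begin

text \<open>
  A major vertex or a clone has at least three neighbours on the hole: a vertex with exactly two
  nonadjacent neighbours x, y would form a theta with the two x-y arcs of the hole, and fewer
  neighbours (or two adjacent ones) would make it minor. Now suppose u and v are adjacent, nested,
  and have no common neighbour in H. Each shared endpoint of the two arcs containing their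
  neighbourhoods is seen by at most one of them, so moving it to that side cuts H into two paths
  P1, P2 with all neighbours of u in P1 and all neighbours of v in P2. Then u, v, P1, P2 form a
  turtle, which graphs in the class exclude.
\<close>

lemma is_hole_adj:
  "is_hole V E C \<Longrightarrow> i < length C \<Longrightarrow> j < length C \<Longrightarrow>
     E (C!i) (C!j) \<longleftrightarrow> j = Suc i mod length C \<or> i = Suc j mod length C"
  unfolding is_hole_def by blast

lemma is_hole_rotate:
  assumes "is_hole V E C"
  shows "is_hole V E (rotate r C)"
proof -
  let ?n = "length C"
  have n: "0 < ?n" using assms unfolding is_hole_def by auto
  have mod_succ: "(r + b) mod ?n = Suc ((r + a) mod ?n) mod ?n \<longleftrightarrow> b = Suc a mod ?n"
    if "a < ?n" "b < ?n" for a b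
  proof -
    have "(r + b) mod ?n = Suc ((r + a) mod ?n) mod ?n \<longleftrightarrow> (r + b) mod ?n = (r + Suc a) mod ?n"
      by (simp add: mod_Suc_eq)
    also have "\<dots> \<longleftrightarrow> b mod ?n = Suc a mod ?n"
      by (simp add: nat_mod_eq_iff)
    finally show ?thesis using that by simp
  qed
  have "E (rotate r C ! a) (rotate r C ! b) \<longleftrightarrow> b = Suc a mod ?n \<or> a = Suc b mod ?n"
    if "a < ?n" "b < ?n" for a b
    using that n mod_succ is_hole_adj[OF assms, of "(r + a) mod ?n" "(r + b) mod ?n"]
    by (simp add: nth_rotate)
  then show ?thesis
    using assms unfolding is_hole_def by simp
qed

lemma is_path_take_hole:
  assumes "is_hole V E C" "0 < k" "k < length C"
  shows "is_path V E (take k C) (C!0) (C!(k-1))"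
proof -
  have "E (take k C ! a) (take k C ! b) \<longleftrightarrow> b = a + 1 \<or> a = b + 1" if "a < k" "b < k" for a b
    using that assms(3) is_hole_adj[OF assms(1), of a b] by auto
  moreover have "C \<noteq> []"
    using assms by auto
  moreover have "last (take k C) = C!(k-1)"
    using assms by (subst last_conv_nth) auto
  ultimately show ?thesis
    using assms unfolding is_hole_def is_path_def
    by (auto simp: hd_conv_nth dest: in_set_takeD)
qed

lemma is_path_rev:
  assumes "is_path V E P a b"
  shows "is_path V E (rev P) b a"
proof -
  let ?m = "length P"
  have "E (rev P ! i) (rev P ! j) \<longleftrightarrow> j = i + 1 \<or> i = j + 1" if "i < ?m" "j < ?m" for i j
  proof -
    have "E (rev P ! i) (rev P ! j) \<longleftrightarrow> ?m - Suc j = ?m - Suc i + 1 \<or> ?m - Suc i = ?m - Suc j + 1"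
      using assms that unfolding is_path_def by (simp add: rev_nth)
    then show ?thesis using that by auto
  qed
  then show ?thesis
    using assms unfolding is_path_def by (simp add: hd_rev last_rev)
qed

lemma is_path_drop_hole:
  assumes "is_hole V E C" "0 < k" "k < length C"
  shows "is_path V E (drop k C) (C!k) (C!(length C - 1))"
proof -
  let ?n = "length C"
  have "0 < ?n" using assms by linarith
  then have ends: "rotate k C ! 0 = C!k" "rotate k C ! (?n - k - 1) = C!(?n - 1)"
    using assms by (simp_all add: nth_rotate)
  have "take (?n - k) (rotate k C) = drop k C"
    using assms by (simp add: rotate_drop_take)
  then show ?thesis
    using ends is_path_take_hole[OF is_hole_rotate[OF assms(1)], of "?n - k" k] assms by simp
qed

lemma is_hole_Cons_path:
  assumes "graph V E" "is_path V E P a b" "3 \<le> length P" "w \<in> V" "w \<notin> set P"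
    and adj_w: "\<And>t. t < length P \<Longrightarrow> E w (P!t) \<longleftrightarrow> t = 0 \<or> t = length P - 1"
  shows "is_hole V E (w # P)"
proof -
  let ?m = "length P"
  have sym: "E x y \<longleftrightarrow> E y x" and irr: "\<not> E x x" for x y
    using assms(1) unfolding graph_def by blast+
  have adj_P: "E (P!i) (P!j) \<longleftrightarrow> j = i + 1 \<or> i = j + 1" if "i < ?m" "j < ?m" for i j
    using assms(2) that unfolding is_path_def by blast
  have "E ((w#P)!i) ((w#P)!j) \<longleftrightarrow> j = Suc i mod Suc ?m \<or> i = Suc j mod Suc ?m"
    if "i < Suc ?m" "j < Suc ?m" for i j
    using that assms(3) adj_w adj_P irr sym[of w]
    by (cases i; cases j) (auto simp: mod_Suc)
  moreover have "distinct (w#P)" "set (w#P) \<subseteq> V"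
    using assms unfolding is_path_def by auto
  ultimately show ?thesis
    using assms(3) unfolding is_hole_def by simp
qed

lemma is_hole_Cons_take:
  assumes "graph V E" "is_hole V E C" "w \<in> V" "w \<notin> set C" "2 \<le> m" "m + 1 < length C"
    and adj_w: "\<And>t. t \<le> m \<Longrightarrow> E w (C!t) \<longleftrightarrow> t = 0 \<or> t = m"
  shows "is_hole V E (w # take (m + 1) C)"
proof (rule is_hole_Cons_path[OF assms(1) is_path_take_hole[OF assms(2)]])
  show "w \<notin> set (take (m + 1) C)"
    using assms(4) by (auto dest: in_set_takeD)
qed (use assms in auto)

lemma is_path_triple:
  assumes "graph V E" "E u x" "E u y" "\<not> E x y" "x \<noteq> y"
  shows "is_path V E [x, u, y] x y"
proof -
  have "E a b \<longleftrightarrow> E b a" "\<not> E a a" for a b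
    using assms(1) unfolding graph_def by blast+
  moreover have "x \<in> V" "u \<in> V" "y \<in> V"
    using assms(1-3) unfolding graph_def by blast+
  ultimately show ?thesis
    using assms unfolding is_path_def by (auto simp: less_Suc_eq nth_Cons')
qed

lemma take_rotate_wrap:
  assumes "0 < m" "m < length C"
  shows "take (length C - m + 1) (rotate m C) = drop m C @ [C!0]"
  using assms by (cases C) (simp_all add: rotate_drop_take)

lemma set_take_drop_wrap:
  assumes "distinct C" "0 < m" "m < length C"
  shows "set (take (m + 1) C) \<inter> set (drop m C @ [C!0]) = {C!0, C!m}"
    and "set (take (m + 1) C) \<union> set (drop m C @ [C!0]) = set C"
proof -
  have "set (take (m + 1) C) = set (take m C) \<union> {C!m}"
    using assms(3) by (simp add: take_Suc_conv_app_nth)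
  moreover have "C!0 \<in> set (take m C)" "C!m \<in> set (drop m C)"
    using assms(2,3) by (auto simp: in_set_conv_nth intro!: exI[of _ 0])
  moreover have "set (take m C) \<inter> set (drop m C) = {}"
    using assms(1) by (simp add: set_take_disj_set_drop_if_distinct)
  moreover have "set (take m C) \<union> set (drop m C) = set C"
    by (metis append_take_drop_id set_append)
  ultimately show "set (take (m + 1) C) \<inter> set (drop m C @ [C!0]) = {C!0, C!m}"
    "set (take (m + 1) C) \<union> set (drop m C @ [C!0]) = set C"
    by auto
qed

lemma mod_less_double: "a < 2 * n \<Longrightarrow> a mod n = (if a < n then a else a - n)"
  for a n :: nat
  by (simp add: mod_if)

lemma nbrs_rotate_apex:
  assumes "0 < m" "m < length C" "t < length C"
    and adj_u: "\<And>t. t < length C \<Longrightarrow> E u (C!t) \<longleftrightarrow> t = 0 \<or> t = m"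
  shows "E u (rotate m C ! t) \<longleftrightarrow> t = 0 \<or> t = length C - m"
proof (cases "t < length C - m")
  case True
  then show ?thesis
    using assms(1,3) adj_u[of "m + t"] by (auto simp: nth_rotate)
next
  case False
  let ?p = "m + t - length C"
  have "length C \<le> m + t" using False by linarith
  then have "rotate m C ! t = C!?p"
    using assms(2,3) by (simp add: nth_rotate mod_less_double)
  moreover have "?p < length C" "?p \<noteq> m" "?p = 0 \<longleftrightarrow> t = length C - m" "t \<noteq> 0"
    using False assms(2,3) by auto
  ultimately show ?thesis
    using adj_u by simp
qed

text \<open>
  The theta consists of x-u-y and the two x-y arcs of C, where x = C!0 and y = C!m; the arc from
  y back to x is the initial segment of C rotated to start at y.
\<close>

lemma has_theta_of_hole_apex:
  assumes "graph V E" "is_hole V E C" "u \<in> V" "u \<notin> set C" "2 \<le> m" "m + 2 \<le> length C"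
    and adj_u: "\<And>t. t < length C \<Longrightarrow> E u (C!t) \<longleftrightarrow> t = 0 \<or> t = m"
  shows "has_theta V E"
proof -
  let ?n = "length C" and ?x = "C!0" and ?y = "C!m"
  define D where "D = rotate m C"
  define P where "P = take (m + 1) C"
  define Q where "Q = take (?n - m + 1) D"
  have D: "is_hole V E D" unfolding D_def by (rule is_hole_rotate[OF assms(2)])
  have adj_D: "t < ?n \<Longrightarrow> E u (D!t) \<longleftrightarrow> t = 0 \<or> t = ?n - m" for t
    unfolding D_def using nbrs_rotate_apex[where E = E and u = u] adj_u assms(5,6) by simp
  have m: "0 < m" "m < ?n" and n: "0 < ?n" using assms(5,6) by linarith+
  then have D_ends: "D!0 = ?y" "D!(?n - m) = ?x"
    unfolding D_def using assms(5,6) by (simp_all add: nth_rotate)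
  have hole_P: "is_hole V E (u # P)"
    unfolding P_def by (rule is_hole_Cons_take[OF assms(1-5)]) (use assms(6) adj_u in auto)
  have hole_Q: "is_hole V E (u # Q)"
    unfolding Q_def by (rule is_hole_Cons_take[OF assms(1) D assms(3)]) (use assms(4-6) adj_D D_def in auto)
  have "is_path V E Q ?y ?x"
    unfolding Q_def using is_path_take_hole[OF D, of "?n - m + 1"] D_ends assms(5,6) D_def by simp
  then have paths: "is_path V E P ?x ?y" "is_path V E (rev Q) ?x ?y"
    unfolding P_def using is_path_take_hole[OF assms(2), of "m + 1"] assms(5,6) is_path_rev by auto
  have "distinct C" using assms(2) unfolding is_hole_def by simp
  then have sets: "set P \<inter> set Q = {?x, ?y}" "set P \<union> set Q = set C"
    unfolding P_def Q_def D_def take_rotate_wrap[OF m] using set_take_drop_wrap[OF _ m] by auto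
  have xy: "E u ?x" "E u ?y" "\<not> E ?x ?y" "?x \<noteq> ?y" "?x \<in> V" "?y \<in> V"
    using adj_u[of 0] adj_u[of m] is_hole_adj[OF assms(2), of 0 m] assms(2,5,6) n
    unfolding is_hole_def by (auto simp: nth_eq_iff_index_eq)
  show ?thesis
    unfolding has_theta_def
  proof (intro exI conjI)
    show "is_path V E [?x, u, ?y] ?x ?y"
      using is_path_triple[OF assms(1)] xy by blast
    show "set [?x, u, ?y] \<inter> set P = {?x, ?y}" "set [?x, u, ?y] \<inter> set (rev Q) = {?x, ?y}"
      using sets assms(4) by auto
    have "set (u # P) = set [?x, u, ?y] \<union> set P" "set (u # Q) = set [?x, u, ?y] \<union> set (rev Q)"
      using sets(1) by auto
    then show "induces_hole V E (set [?x, u, ?y] \<union> set P)"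
      "induces_hole V E (set [?x, u, ?y] \<union> set (rev Q))"
      "induces_hole V E (set P \<union> set (rev Q))"
      unfolding induces_hole_def using hole_P hole_Q assms(2) sets(2) by (metis set_rev)+
  qed (use paths sets xy in auto)
qed

lemma has_theta_of_nonadjacent_nbrs:
  assumes "graph V E" "is_hole V E H" "u \<in> V" "u \<notin> set H"
    and nbrs: "nbrs_H E H u = {x, y}" and "x \<noteq> y" "\<not> E x y"
  shows "has_theta V E"
proof -
  let ?n = "length H"
  have n: "4 \<le> ?n" "H \<noteq> []" using assms(2) unfolding is_hole_def by auto
  obtain s where s: "s < ?n" "x = H!s"
    using nbrs unfolding nbrs_H_def by (metis in_set_conv_nth insertI1 mem_Collect_eq)
  define C where "C = rotate s H"
  have C: "is_hole V E C" unfolding C_def by (rule is_hole_rotate[OF assms(2)])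
  have C_set: "set C = set H" and C_len: "length C = ?n" and C_dist: "distinct C"
    using assms(2) unfolding C_def is_hole_def by auto
  have x: "C!0 = x" unfolding C_def using s n by (simp add: nth_rotate)
  obtain m where m: "m < ?n" "y = C!m"
    using nbrs C_set C_len unfolding nbrs_H_def by (metis in_set_conv_nth insertI1 insert_commute mem_Collect_eq)
  have adj_u: "E u (C!t) \<longleftrightarrow> t = 0 \<or> t = m" if "t < ?n" for t
  proof -
    have "E u (C!t) \<longleftrightarrow> C!t \<in> {C!0, C!m}"
      using nbrs that x m C_set C_len unfolding nbrs_H_def by (metis mem_Collect_eq nth_mem)
    then show ?thesis
      using that m n C_dist C_len by (auto simp: nth_eq_iff_index_eq)
  qed
  have "m \<noteq> 0" using assms(6) x m by metis
  moreover have "m \<noteq> 1" "m \<noteq> ?n - 1"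
    using assms(7) x m n is_hole_adj[OF C, of 0 1] is_hole_adj[OF C, of 0 "?n - 1"] C_len
    by auto
  ultimately show ?thesis
    using has_theta_of_hole_apex[OF assms(1) C assms(3), of m] assms(4) C_set C_len m adj_u
    by fastforce
qed

lemma card_three_path:
  assumes "distinct H" "3 \<le> length H"
  shows "card (three_path H i) = 3"
proof -
  let ?n = "length H"
  have "i mod ?n \<noteq> Suc i mod ?n" "Suc i mod ?n \<noteq> Suc (Suc i) mod ?n" "i mod ?n \<noteq> Suc (Suc i) mod ?n"
    using assms(2) by (auto simp: mod_Suc)
  moreover have "0 < ?n" using assms(2) by linarith
  ultimately show ?thesis
    using assms(1) unfolding three_path_def by (simp add: nth_eq_iff_index_eq)
qed

lemma minor_if_nbrs_within_edge:
  assumes "is_hole V E H" "u \<notin> set H" "nbrs_H E H u \<noteq> {}" "nbrs_H E H u \<subseteq> {x, y}"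
    and "x \<in> set H" "y \<in> set H" "x = y \<or> E x y"
  shows "minor E H u"
proof -
  let ?n = "length H"
  obtain s t where st: "s < ?n" "x = H!s" "t < ?n" "y = H!t"
    using assms(5,6) by (metis in_set_conv_nth)
  have "x = y \<or> t = Suc s mod ?n \<or> s = Suc t mod ?n"
    using assms(7) is_hole_adj[OF assms(1)] st by auto
  then have "{x, y} \<subseteq> three_path H s \<or> {x, y} \<subseteq> three_path H t"
    using st unfolding three_path_def by auto
  then show ?thesis
    unfolding minor_def using assms(2-4) st by blast
qed

lemma card_nbrs_ge_3:
  assumes "graph V E" "\<not> has_theta V E" "is_hole V E H" "u \<in> V" "u \<notin> set H"
    and "major E H u \<or> is_clone E H u"
  shows "3 \<le> card (nbrs_H E H u)"
  using assms(6)
proof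
  assume "is_clone E H u"
  then obtain i where "nbrs_H E H u = three_path H i"
    unfolding is_clone_def clone_of_def by blast
  then show ?thesis
    using card_three_path[of H i] assms(3) unfolding is_hole_def by auto
next
  assume major: "major E H u"
  let ?N = "nbrs_H E H u"
  have N: "finite ?N" "?N \<noteq> {}" "?N \<subseteq> set H"
    using major unfolding major_def nbrs_H_def by auto
  show ?thesis
  proof (rule ccontr)
    assume "\<not> 3 \<le> card ?N"
    moreover have "card ?N \<noteq> 0" using N by simp
    ultimately have "card ?N = 1 \<or> card ?N = 2" by linarith
    then obtain x y where xy: "?N = {x, y}"
      by (metis card_1_singletonE card_2_iff insert_absorb2)
    have xy_H: "x \<in> set H" "y \<in> set H" using xy N by auto
    show False
    proof (cases "x = y \<or> E x y")
      case True
      then have "minor E H u"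
        using minor_if_nbrs_within_edge[OF assms(3,5) _ _ xy_H] xy N by simp
      then show False using major unfolding major_def by simp
    next
      case False
      then have "has_theta V E"
        using has_theta_of_nonadjacent_nbrs[OF assms(1,3,4,5) xy(1)] by simp
      then show False using assms(2) by simp
    qed
  qed
qed

lemma has_turtle_of_hole_split:
  assumes "is_hole V E C" "u \<in> V" "v \<in> V" "u \<notin> set C" "v \<notin> set C" "E u v"
    and "0 < k" "k < length C"
    and "3 \<le> card (nbrs_H E C u)" "3 \<le> card (nbrs_H E C v)"
    and u_side: "nbrs_H E C u \<subseteq> set (take k C)" and v_side: "nbrs_H E C v \<subseteq> set (drop k C)"
  shows "has_turtle V E"
proof -
  let ?n = "length C"
  define P1 where "P1 = take k C"
  define P2 where "P2 = rev (drop k C)"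
  have paths: "is_path V E P1 (C!0) (C!(k-1))" "is_path V E P2 (C!(?n - 1)) (C!k)"
    unfolding P1_def P2_def
    by (rule is_path_take_hole[OF assms(1,7,8)], rule is_path_rev[OF is_path_drop_hole[OF assms(1,7,8)]])
  have disj: "set P1 \<inter> set P2 = {}"
    using assms(1) unfolding P1_def P2_def is_hole_def by (simp add: set_take_disj_set_drop_if_distinct)
  have un: "set P1 \<union> set P2 = set C"
    unfolding P1_def P2_def by (metis append_take_drop_id set_append set_rev)
  have "C \<noteq> []" using assms(8) by auto
  then have ends: "E (C!0) (C!(?n - 1))" "E (C!(k-1)) (C!k)"
    using is_hole_adj[OF assms(1), of 0 "?n - 1"] is_hole_adj[OF assms(1), of "k - 1" k] assms(7,8)
    by auto
  have nbrs: "{w \<in> set P1. E u w} = nbrs_H E C u" "{w \<in> set P2. E v w} = nbrs_H E C v"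
    "\<forall>w \<in> set P2. \<not> E u w" "\<forall>w \<in> set P1. \<not> E v w"
    using u_side v_side disj un unfolding P1_def P2_def nbrs_H_def by auto
  show ?thesis
    unfolding has_turtle_def
  proof (intro exI conjI)
    show "induces_hole V E (set P1 \<union> set P2)"
      unfolding induces_hole_def un using assms(1) by blast
    show "u \<notin> set P1 \<union> set P2" "v \<notin> set P1 \<union> set P2"
      unfolding un by (fact assms(4,5))+
    show "3 \<le> card {w \<in> set P1. E u w}" "3 \<le> card {w \<in> set P2. E v w}"
      unfolding nbrs by (fact assms(9,10))+
  qed (fact paths disj ends nbrs(3,4) assms(2,3,6))+
qed

lemma nth_in_set_take_rotate:
  assumes "s \<le> t" "t < e" "e \<le> length C"
  shows "C!t \<in> set (take (e - s) (rotate s C))"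
proof -
  have "take (e - s) (rotate s C) ! (t - s) = C!t"
    using assms by (simp add: nth_rotate)
  moreover have "t - s < length (take (e - s) (rotate s C))"
    using assms by simp
  ultimately show ?thesis
    by (metis nth_mem)
qed

lemma nth_in_set_drop_rotate:
  assumes "s \<le> e" "e \<le> length C" "t < length C" "e \<le> t \<or> t < s"
  shows "C!t \<in> set (drop (e - s) (rotate s C))"
proof -
  let ?n = "length C"
  define p where "p = (if s \<le> t then t - s else t + ?n - s)"
  have p: "e - s \<le> p" "p < ?n"
    using assms unfolding p_def by auto
  have "drop (e - s) (rotate s C) ! (p - (e - s)) = C!t"
    using assms p unfolding p_def by (auto simp: nth_rotate)
  moreover have "p - (e - s) < length (drop (e - s) (rotate s C))"
    using p by simp
  ultimately show ?thesis
    by (metis nth_mem)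
qed

text \<open>
  The common endpoints C!0 and C!d of the two arcs are each moved to the side of the set
  containing them; this is consistent because A and B are disjoint.
\<close>

lemma cut_between_arcs:
  assumes "d < length C"
    and A: "A \<subseteq> {C!t | t. t \<le> d}" and B: "B \<subseteq> {C!t | t. d \<le> t \<and> t < length C} \<union> {C!0}"
    and "A \<inter> B = {}" "A \<noteq> {}" "B \<noteq> {}"
  shows "\<exists>s k. 0 < k \<and> k < length C \<and> A \<subseteq> set (take k (rotate s C)) \<and> B \<subseteq> set (drop k (rotate s C))"
proof -
  let ?n = "length C"
  define s :: nat where "s = (if C!0 \<in> B then 1 else 0)"
  define e where "e = (if C!d \<in> A then d + 1 else d)"
  have s: "s \<le> 1" "s = 1 \<longleftrightarrow> C!0 \<in> B" and e: "d \<le> e" "e \<le> d + 1" "e = d + 1 \<longleftrightarrow> C!d \<in> A"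
    unfolding s_def e_def by auto
  have A_pos: "\<exists>t. s \<le> t \<and> t < e \<and> w = C!t" if w: "w \<in> A" for w
  proof -
    obtain t where t: "t \<le> d" "w = C!t" using A w by auto
    have "s = 1 \<Longrightarrow> t \<noteq> 0" "t = d \<Longrightarrow> e = d + 1"
      using assms(4) w t s e by auto
    then have "s \<le> t" "t < e"
      using t(1) s(1) e(1) by (cases "s = 1"; cases "t = d"; simp)+
    then show ?thesis
      using t(2) by blast
  qed
  have B_pos: "\<exists>t. (e \<le> t \<and> t < ?n \<or> t < s) \<and> w = C!t" if w: "w \<in> B" for w
  proof -
    obtain t where t: "d \<le> t \<and> t < ?n \<or> t = 0" "w = C!t" using B w by auto
    have "t = 0 \<Longrightarrow> s = 1" "e = d + 1 \<Longrightarrow> t \<noteq> d"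
      using assms(4) w t s e by auto
    then have "e \<le> t \<and> t < ?n \<or> t < s"
      using t(1) e(1,2) by (cases "t = 0"; cases "e = d + 1"; simp)
    then show ?thesis
      using t(2) by blast
  qed
  obtain a where "a \<in> A" using assms(5) by blast
  then have "s < e" using A_pos by fastforce
  obtain b where "b \<in> B" using assms(6) by blast
  then have "e - s < ?n" using B_pos assms(1) e by fastforce
  have "e \<le> ?n" using assms(1) e by simp
  have "A \<subseteq> set (take (e - s) (rotate s C))"
    using A_pos nth_in_set_take_rotate[of s _ e C] \<open>e \<le> ?n\<close> by blast
  moreover have "B \<subseteq> set (drop (e - s) (rotate s C))"
    using B_pos nth_in_set_drop_rotate[of s e C] \<open>s < e\<close> \<open>e \<le> ?n\<close> by fastforce
  ultimately show ?thesis
    using \<open>s < e\<close> \<open>e - s < ?n\<close> by (intro exI[of _ s] exI[of _ "e - s"]) simp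
qed

lemma arc_subset_rotate:
  assumes "i < length H"
  shows "arc H i j \<subseteq> {rotate i H ! t | t. t \<le> (j + length H - i) mod length H}"
proof
  fix w assume "w \<in> arc H i j"
  then obtain k where k: "w = H ! ((i + k) mod length H)" "k \<le> (j + length H - i) mod length H"
    unfolding arc_def by blast
  have "(j + length H - i) mod length H < length H"
    using assms by (intro mod_less_divisor) linarith
  then have "rotate i H ! k = w"
    using k by (simp add: nth_rotate)
  then show "w \<in> {rotate i H ! t | t. t \<le> (j + length H - i) mod length H}"
    using k(2) by blast
qed

lemma arc_back_subset_rotate:
  assumes "i < length H" "j < length H" "i \<noteq> j"
  defines "d \<equiv> (j + length H - i) mod length H"
  shows "arc H j i \<subseteq> {rotate i H ! t | t. d \<le> t \<and> t < length H} \<union> {rotate i H ! 0}"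
proof
  let ?n = "length H"
  fix w assume "w \<in> arc H j i"
  then obtain k where k: "w = H ! ((j + k) mod ?n)" "k \<le> (i + ?n - j) mod ?n"
    unfolding arc_def by blast
  have "d + k \<le> ?n" "(i + (d + k) mod ?n) mod ?n = (j + k) mod ?n"
    using assms(1-3) k(2) unfolding d_def by (auto simp: mod_less_double split: if_splits)
  moreover have "0 < ?n" using assms(1) by linarith
  ultimately have "w = rotate i H ! ((d + k) mod ?n)"
    using k(1) by (simp add: nth_rotate)
  moreover have "(d + k) mod ?n = 0 \<or> d \<le> (d + k) mod ?n"
    using \<open>d + k \<le> ?n\<close> by (cases "d + k = ?n") auto
  ultimately show "w \<in> {rotate i H ! t | t. d \<le> t \<and> t < ?n} \<union> {rotate i H ! 0}"
    using mod_less_divisor[OF \<open>0 < ?n\<close>, of "d + k"] by auto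
qed

lemma nested_arcs_cut:
  assumes "i < length H" "j < length H" "i \<noteq> j" "A \<subseteq> arc H i j" "B \<subseteq> arc H j i"
    and "A \<inter> B = {}" "A \<noteq> {}" "B \<noteq> {}"
  shows "\<exists>r k. 0 < k \<and> k < length H \<and> A \<subseteq> set (take k (rotate r H)) \<and> B \<subseteq> set (drop k (rotate r H))"
proof -
  let ?d = "(j + length H - i) mod length H"
  have "?d < length H"
    using assms(1) by (intro mod_less_divisor) linarith
  moreover have "A \<subseteq> {rotate i H ! t | t. t \<le> ?d}"
    using assms(4) arc_subset_rotate[OF assms(1)] by blast
  moreover have "B \<subseteq> {rotate i H ! t | t. ?d \<le> t \<and> t < length H} \<union> {rotate i H ! 0}"
    using assms(5) arc_back_subset_rotate[OF assms(1-3)] by blast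
  ultimately have "\<exists>s k. 0 < k \<and> k < length H \<and> A \<subseteq> set (take k (rotate s (rotate i H)))
      \<and> B \<subseteq> set (drop k (rotate s (rotate i H)))"
    using cut_between_arcs[of ?d "rotate i H" A B] assms(6-8) by simp
  then show ?thesis
    by (metis rotate_rotate)
qed

theorem lemma2p5:
  fixes V :: "'a set" and E :: "'a \<Rightarrow> 'a \<Rightarrow> bool" and H :: "'a list" and u v :: 'a
  assumes "graph V E"
    and "in_class_C V E"
    and "is_hole V E H"
    and "u \<in> V - set H" and "v \<in> V - set H"
    and "major E H u \<or> is_clone E H u"
    and "major E H v \<or> is_clone E H v"
    and "nested E H u v"
    and "E u v"
  shows "\<exists>w \<in> set H. E u w \<and> E v w"
proof (rule ccontr)
  assume "\<not> (\<exists>w \<in> set H. E u w \<and> E v w)"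
  then have disj: "nbrs_H E H u \<inter> nbrs_H E H v = {}"
    unfolding nbrs_H_def by blast
  have no_theta: "\<not> has_theta V E" and no_turtle: "\<not> has_turtle V E"
    using assms(2) unfolding in_class_C_def by auto
  have card: "3 \<le> card (nbrs_H E H u)" "3 \<le> card (nbrs_H E H v)"
    using card_nbrs_ge_3[OF assms(1) no_theta assms(3)] assms(4-7) by auto
  obtain i j where "i < length H" "j < length H" "i \<noteq> j"
    and "nbrs_H E H u \<subseteq> arc H i j" "nbrs_H E H v \<subseteq> arc H j i"
    using assms(8) unfolding nested_def by blast
  then obtain r k where cut: "0 < k" "k < length H"
      "nbrs_H E H u \<subseteq> set (take k (rotate r H))" "nbrs_H E H v \<subseteq> set (drop k (rotate r H))"
    using nested_arcs_cut disj card by (metis card.empty not_numeral_le_zero)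
  have "nbrs_H E (rotate r H) x = nbrs_H E H x" for x
    unfolding nbrs_H_def by simp
  then have "has_turtle V E"
    using has_turtle_of_hole_split[OF is_hole_rotate[OF assms(3)], of u v r k] assms(4,5,9) card cut
    by simp
  with no_turtle show False ..
qed
end
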